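(* Let $q$ be a prime power, $n=q^2-1$, let $0\le t\le n-1$ with $q$-adic expression $t=b_0+b_1q$ ($0\le b_0,b_1\le q-1$), let $\Delta=\{0,1,\ldots,t\}$ and let $E=D_\Delta\subseteq\mathbb{F}_{q^2}^{n}$ be the corresponding Reed–Solomon code. Then the EAQECC associated with $E$ (Hermitian construction) has parameters $$[[q^2-1,\,(q-b_1)^2-2b_0-2,\,t+2;\,b_1^2+1]]_q$$ when $b_0+b_1<q-1$, and parameters $$[[q^2-1,\,(q-b_1-1)^2,\,t+2;\,b_1^2+2(b_0+b_1-q)+4]]_q$$ otherwise (i.e. when $b_0+b_1\ge q-1$).
   Context: Let $P_1,\dots,P_n$ be the $n=q^2-1$ nonzero elements of $\mathbb{F}_{q^2}$ (the roots of $X^n-1$). For $\Delta\subseteq\{0,1,\ldots,n-1\}$, $D_\Delta$ is the $\mathbb{F}_{q^2}$-linear code spanned by the vectors $(P_1^i,\dots,P_n^i)$, $i\in\Delta$. The Hermitian inner product on $\mathbb{F}_{q^2}^n$ is $x\cdot y=\sum_{i=1}^n x_iy_i^q$. For a linear code $E\subseteq\mathbb{F}_{q^2}^n$ of dimension $k$ whose Hermitian dual $C$ has minimum distance $d$, the associated EAQECC is an entanglement-assisted quantum error-correcting code over $\mathbb{F}_q$ with parameters $[[n,\,n-2k+c,\,d;\,c]]_q$ (length, dimension, minimum distance, number of maximally entangled pairs), where $c=\dim E-\dim(E\cap C)$. *)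

theory Defs
  imports Main "HOL-Library.Function_Algebras" "HOL-Library.Cardinality" "HOL-Number_Theory.Number_Theory"
begin

text \<open>Vectors of length n over a field are functions nat => 'a, coordinates 0..<n,
  vanishing outside {0..<n}.\<close>

definition vsc :: "'a::field \<Rightarrow> (nat \<Rightarrow> 'a) \<Rightarrow> (nat \<Rightarrow> 'a)" where
  "vsc c v = (\<lambda>i. c * v i)"

definition ambient :: "nat \<Rightarrow> (nat \<Rightarrow> 'a::field) set" where
  "ambient n = {v. \<forall>i\<ge>n. v i = 0}"

definition D_code :: "nat \<Rightarrow> (nat \<Rightarrow> 'a::field) \<Rightarrow> nat set \<Rightarrow> (nat \<Rightarrow> 'a) set" where
  "D_code n P Delta = module.span vsc ((\<lambda>i. (\<lambda>j. if j < n then P j ^ i else 0)) ` Delta)"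

definition herm_ip :: "nat \<Rightarrow> nat \<Rightarrow> (nat \<Rightarrow> 'a::field) \<Rightarrow> (nat \<Rightarrow> 'a) \<Rightarrow> 'a" where
  "herm_ip q n x y = (\<Sum>i<n. x i * y i ^ q)"

definition herm_dual :: "nat \<Rightarrow> nat \<Rightarrow> (nat \<Rightarrow> 'a::field) set \<Rightarrow> (nat \<Rightarrow> 'a) set" where
  "herm_dual q n E = {y \<in> ambient n. \<forall>x\<in>E. herm_ip q n x y = 0}"

definition hweight :: "nat \<Rightarrow> (nat \<Rightarrow> 'a::field) \<Rightarrow> nat" where
  "hweight n v = card {i. i < n \<and> v i \<noteq> 0}"

text \<open>Minimum distance of a linear code; by the usual convention the zero code has
  minimum distance n+1.\<close>
definition min_dist :: "nat \<Rightarrow> (nat \<Rightarrow> 'a::field) set \<Rightarrow> nat" where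
  "min_dist n C = (if C \<subseteq> {(\<lambda>_. 0)} then n + 1
     else (LEAST d. \<exists>v\<in>C. v \<noteq> (\<lambda>_. 0) \<and> hweight n v = d))"

definition cdim :: "(nat \<Rightarrow> 'a::field) set \<Rightarrow> nat" where
  "cdim E = vector_space.dim vsc E"

end

theory Submission
  imports Defs "HOL-Computational_Algebra.Polynomial"
begin

(* Let n = q^2 - 1 and write ev i for the evaluation vector (P_k^i)_k. The power sums
   sum_k P_k^m equal -1 when n divides m and vanish otherwise. Hence the ev i with i < n are
   linearly independent, so dim E = t + 1, and by Frobenius the Hermitian product of ev j with
   sum_i c_i ev i is minus the sum of those c_i^q for which n divides j + q i, i.e. for which
   i is the residue of -q j modulo n. As (-q)^2 = q^2 is 1 modulo n, this pairing of indices
   is an involution, so E \<inter> C is spanned by the ev i whose partner exceeds t, and c counts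
   the i \<le> t whose partner is at most t; a base-q digit count evaluates this number.
   Conjugating coordinates, y \<mapsto> y^q, turns C into the Euclidean dual of the Reed-Solomon
   code E, which is MDS of minimum distance t + 2: a polynomial of degree \<le> t vanishing on all
   but one point of the support excludes lighter codewords, and X * prod (X - P_l) over
   n - t - 2 points evaluates to one of weight t + 2. *)

section \<open>Finite fields\<close>

(* The library's finite_field_power_card_eq_same is stated for the class finite_field,
   which the sort {field, finite} is not known to be an instance of. *)
lemma power_card_minus_one_eq_one:
  fixes x :: "'a::{field,finite}"
  assumes "x \<noteq> 0"
  shows "x ^ (CARD('a) - 1) = 1"
proof -
  have "(\<Prod>y\<in>UNIV - {0}. x * y) = (\<Prod>y\<in>UNIV - {0}. y)"
    by (rule prod.reindex_bij_witness[of _ "\<lambda>y. y / x" "\<lambda>y. x * y"]) (use assms in auto)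
  moreover have "(\<Prod>y\<in>UNIV - {0}. x * y) = x ^ (CARD('a) - 1) * \<Prod>(UNIV - {0})"
    by (simp add: prod.distrib card_Diff_singleton)
  moreover have "\<Prod>(UNIV - {0::'a}) \<noteq> 0"
    by simp
  ultimately show ?thesis
    by simp
qed

lemma power_card_eq_same: "(x :: 'a::{field,finite}) ^ CARD('a) = x"
proof (cases "x = 0")
  case False
  have "CARD('a) = Suc (CARD('a) - 1)"
    using finite_UNIV_card_ge_0[where ?'a = 'a] by simp
  then show ?thesis
    using power_card_minus_one_eq_one[OF False] by (metis power_Suc mult_1_right)
qed (use finite_UNIV_card_ge_0[where ?'a = 'a] in simp)

lemma one_less_card: "1 < CARD('a::{field,finite})"
proof -
  have "card {0::'a, 1} \<le> CARD('a)"
    by (rule card_mono) auto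
  then show ?thesis
    by simp
qed

lemma of_nat_card_eq_zero: "of_nat CARD('a::{field,finite}) = (0 :: 'a)"
  using CHAR_dvd_CARD[where ?'a = 'a] of_nat_eq_0_iff_char_dvd by blast

lemma prime_CHAR_finite_field: "prime CHAR('a::{field,finite})"
  using prime_CHAR_semidom[where ?'a = 'a] finite_imp_CHAR_pos[where ?'a = 'a] by auto

lemma exists_power_neq_one:
  assumes "\<not> CARD('a::{field,finite}) - 1 dvd m"
  shows "\<exists>g::'a. g \<noteq> 0 \<and> g ^ m \<noteq> 1"
proof (rule ccontr)
  assume "\<not> ?thesis"
  then have all_one: "g ^ m = 1" if "g \<noteq> 0" for g :: 'a
    using that by blast
  define n where "n = CARD('a) - 1"
  define d where "d = m mod n"
  have d: "0 < d" "d < n"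
    using assms one_less_card[where ?'a = 'a]
    by (auto simp: d_def n_def mod_greater_zero_iff_not_dvd)
  have root: "g ^ d = 1" if "g \<noteq> 0" for g :: 'a
  proof -
    have "g ^ m = g ^ (n * (m div n) + d)"
      by (simp add: d_def)
    then show ?thesis
      using all_one[OF that] power_card_minus_one_eq_one[OF that]
      by (simp add: power_add power_mult n_def)
  qed
  define p where "p = monom (1::'a) d + [:-1:]"
  have deg_p: "degree p = d"
    using d unfolding p_def by (subst degree_add_eq_left) (auto simp: degree_monom_eq)
  then have "p \<noteq> 0"
    using d by auto
  have "UNIV - {0} \<subseteq> {x. poly p x = 0}"
    using root by (auto simp: p_def poly_monom)
  then have "card (UNIV - {0::'a}) \<le> card {x. poly p x = 0}"
    by (intro card_mono poly_roots_finite \<open>p \<noteq> 0\<close>)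
  also have "\<dots> \<le> d"
    using card_poly_roots_bound[OF \<open>p \<noteq> 0\<close>] deg_p by simp
  finally show False
    using d by (simp add: n_def card_Diff_singleton)
qed

lemma sum_nonzero_powers:
  "(\<Sum>y\<in>UNIV - {0::'a::{field,finite}}. y ^ m) = (if CARD('a) - 1 dvd m then -1 else 0)"
proof (cases "CARD('a) - 1 dvd m")
  case True
  then obtain r where m: "m = (CARD('a) - 1) * r"
    by blast
  have "(\<Sum>y\<in>UNIV - {0::'a}. y ^ m) = (\<Sum>y\<in>UNIV - {0::'a}. 1)"
    using power_card_minus_one_eq_one[where ?'a = 'a]
    by (intro sum.cong refl) (auto simp: m power_mult)
  also have "\<dots> = of_nat CARD('a) - 1"
    using one_less_card[where ?'a = 'a] by (simp add: card_Diff_singleton of_nat_diff)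
  also have "\<dots> = -1"
    by (simp add: of_nat_card_eq_zero)
  finally show ?thesis
    using True by simp
next
  case False
  obtain g :: 'a where g: "g \<noteq> 0" "g ^ m \<noteq> 1"
    using exists_power_neq_one[OF False] by blast
  have "(\<Sum>y\<in>UNIV - {0}. y ^ m) = (\<Sum>y\<in>UNIV - {0}. (g * y) ^ m)"
    by (rule sum.reindex_bij_witness[of _ "\<lambda>y. g * y" "\<lambda>y. y / g"]) (use g in auto)
  also have "\<dots> = g ^ m * (\<Sum>y\<in>UNIV - {0}. y ^ m)"
    by (simp add: power_mult_distrib sum_distrib_left)
  finally have "(1 - g ^ m) * (\<Sum>y\<in>UNIV - {0::'a}. y ^ m) = 0"
    by (simp add: algebra_simps)
  then show ?thesis
    using False g by simp
qed

lemma CHAR_power_eq: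
  assumes "primepow q" "CARD('a::{field,finite}) = q ^ k"
  shows "\<exists>e. q = CHAR('a) ^ e"
proof -
  obtain p e where p: "prime p" "q = p ^ e"
    using assms(1) by (auto simp: primepow_def)
  have "CHAR('a) dvd p ^ (e * k)"
    using CHAR_dvd_CARD[where ?'a = 'a] assms(2) p(2) by (simp add: power_mult)
  then have "CHAR('a) dvd p"
    using prime_CHAR_finite_field[where ?'a = 'a] prime_dvd_power by blast
  then have "CHAR('a) = p"
    using prime_CHAR_finite_field[where ?'a = 'a] p(1) primes_dvd_imp_eq by blast
  then show ?thesis
    using p(2) by blast
qed

section \<open>Evaluation codes on the nonzero field elements\<close>

lemma sum_fun_apply: "(sum f A) x = (\<Sum>a\<in>A. f a x)"
  by (induction A rule: infinite_finite_induct) auto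

interpretation vs: vector_space "vsc :: 'a::field \<Rightarrow> (nat \<Rightarrow> 'a) \<Rightarrow> _"
  by unfold_locales (auto simp: vsc_def fun_eq_iff algebra_simps)

lemma sum_poly_eq_sum_coeff:
  fixes P :: "nat \<Rightarrow> 'a::comm_ring_1"
  shows "(\<Sum>k<n. poly f (P k) * w k) = (\<Sum>i\<le>degree f. coeff f i * (\<Sum>k<n. P k ^ i * w k))"
proof -
  have "(\<Sum>k<n. poly f (P k) * w k) = (\<Sum>k<n. \<Sum>i\<le>degree f. coeff f i * (P k ^ i * w k))"
    by (intro sum.cong refl) (simp add: poly_altdef sum_distrib_right mult.assoc)
  also have "\<dots> = (\<Sum>i\<le>degree f. coeff f i * (\<Sum>k<n. P k ^ i * w k))"
    by (subst sum.swap) (simp add: sum_distrib_left)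
  finally show ?thesis .
qed

lemma sum_poly_mult_eq_zero:
  fixes P :: "nat \<Rightarrow> 'a::comm_ring_1"
  assumes "\<forall>j\<le>t. (\<Sum>k<n. P k ^ j * w k) = 0" "degree f \<le> t"
  shows "(\<Sum>k<n. poly f (P k) * w k) = 0"
  unfolding sum_poly_eq_sum_coeff using assms by (intro sum.neutral) auto

lemma degree_prod_linear_le:
  "finite A \<Longrightarrow> degree (\<Prod>l\<in>A. [:- a l, 1:]) \<le> card A"
  using degree_prod_sum_le[of A "\<lambda>l. [:- a l, 1:]"] by simp

lemma poly_prod_linear_eq_0_iff:
  fixes a :: "'b \<Rightarrow> 'a::idom"
  shows "finite A \<Longrightarrow> poly (\<Prod>l\<in>A. [:- a l, 1:]) x = 0 \<longleftrightarrow> (\<exists>l\<in>A. x = a l)"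
  by (simp add: poly_prod prod_zero_iff)

lemma min_dist_eqI:
  assumes "\<And>v. v \<in> C \<Longrightarrow> v \<noteq> (\<lambda>_. 0) \<Longrightarrow> d \<le> hweight n v"
    and "v \<in> C" "v \<noteq> (\<lambda>_. 0)" "hweight n v = d"
  shows "min_dist n C = d"
proof -
  have "(LEAST d. \<exists>v\<in>C. v \<noteq> (\<lambda>_. 0) \<and> hweight n v = d) = d"
    by (rule Least_equality) (use assms in auto)
  moreover have "\<not> C \<subseteq> {(\<lambda>_. 0)}"
    using assms(2,3) by auto
  ultimately show ?thesis
    by (simp add: min_dist_def)
qed

lemma hweight_le: "hweight n v \<le> n"
  unfolding hweight_def by (rule order.trans[OF card_mono[of "{..<n}"]]) auto

lemma hweight_power: "0 < q \<Longrightarrow> hweight n (\<lambda>k. v k ^ q) = hweight n v"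
  by (simp add: hweight_def)

locale nonzero_enumeration =
  fixes n :: nat and P :: "nat \<Rightarrow> 'a::{field,finite}"
  assumes n_eq: "n = CARD('a) - 1"
    and bij_P: "bij_betw P {0..<n} (UNIV - {0})"
begin

lemma P_nonzero: "k < n \<Longrightarrow> P k \<noteq> 0"
  using bij_P by (auto simp: bij_betw_def)

lemma P_eq_iff: "k < n \<Longrightarrow> l < n \<Longrightarrow> P k = P l \<longleftrightarrow> k = l"
  using bij_P by (auto simp: bij_betw_def inj_on_def)

lemma n_pos: "0 < n"
  using one_less_card[where ?'a = 'a] by (simp add: n_eq)

lemma power_sum: "(\<Sum>k<n. P k ^ m) = (if n dvd m then -1 else 0)"
  using sum.reindex_bij_betw[OF bij_P, of "\<lambda>y. y ^ m"] sum_nonzero_powers[of m]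
  by (simp add: n_eq atLeast0LessThan)

definition ev :: "nat \<Rightarrow> nat \<Rightarrow> 'a" where
  "ev i = (\<lambda>k. if k < n then P k ^ i else 0)"

lemma D_code_eq: "D_code n P I = vs.span (ev ` I)"
  by (simp add: D_code_def ev_def)

definition lincomb :: "(nat \<Rightarrow> 'a) \<Rightarrow> nat set \<Rightarrow> nat \<Rightarrow> 'a" where
  "lincomb c I = (\<Sum>i\<in>I. vsc (c i) (ev i))"

lemma lincomb_apply: "lincomb c I k = (if k < n then \<Sum>i\<in>I. c i * P k ^ i else 0)"
  by (simp add: lincomb_def sum_fun_apply vsc_def ev_def)

lemma lincomb_mono_neutral:
  assumes "J \<subseteq> I" "finite I" "\<forall>i\<in>I - J. c i = 0"
  shows "lincomb c I = lincomb c J"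
  unfolding lincomb_def using assms
  by (intro sum.mono_neutral_right) (auto simp: vsc_def fun_eq_iff)

lemma lincomb_in_ambient: "lincomb c I \<in> ambient n"
  by (simp add: ambient_def lincomb_apply)

(* The exponent n - m makes coord m dual to ev m, by the orthogonality of the power sums. *)
definition coord :: "nat \<Rightarrow> (nat \<Rightarrow> 'a) \<Rightarrow> 'a" where
  "coord m x = - (\<Sum>k<n. x k * P k ^ (n - m))"

lemma coord_ev:
  assumes "i < n" "m < n"
  shows "coord m (ev i) = (if i = m then 1 else 0)"
proof -
  have "n dvd i + (n - m) \<longleftrightarrow> i = m"
  proof
    assume "n dvd i + (n - m)"
    then obtain r where r: "i + (n - m) = n * r" ..
    have "n * r < n * 2" "n * r \<noteq> 0"
      using r assms by linarith+
    then have "r = 1"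
      by simp
    then show "i = m"
      using r assms by simp
  qed (use assms in simp)
  moreover have "coord m (ev i) = - (\<Sum>k<n. P k ^ (i + (n - m)))"
    by (simp add: coord_def ev_def power_add)
  ultimately show ?thesis
    by (simp add: power_sum)
qed

lemma coord_lincomb:
  assumes "I \<subseteq> {..<n}" "m \<in> I"
  shows "coord m (lincomb c I) = c m"
proof -
  have "coord m (lincomb c I) = - (\<Sum>k<n. \<Sum>i\<in>I. c i * (P k ^ i * P k ^ (n - m)))"
    by (simp add: coord_def lincomb_apply sum_distrib_right mult.assoc)
  also have "\<dots> = (\<Sum>i\<in>I. c i * - (\<Sum>k<n. P k ^ i * P k ^ (n - m)))"
    by (subst sum.swap) (simp add: sum_distrib_left sum_negf)
  also have "\<dots> = (\<Sum>i\<in>I. c i * coord m (ev i))"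
    by (simp add: coord_def ev_def)
  also have "\<dots> = (\<Sum>i\<in>I. if i = m then c i else 0)"
  proof (intro sum.cong refl)
    fix i assume "i \<in> I"
    then have "i < n" "m < n"
      using assms by auto
    then show "c i * coord m (ev i) = (if i = m then c i else 0)"
      by (simp add: coord_ev)
  qed
  also have "\<dots> = c m"
    using assms finite_subset[OF assms(1)] by simp
  finally show ?thesis .
qed

lemma inj_on_ev: "inj_on ev {..<n}"
proof (rule inj_onI)
  fix i j assume ij: "i \<in> {..<n}" "j \<in> {..<n}" and eq: "ev i = ev j"
  have "coord i (ev j) = 1"
    using coord_ev[of i i] ij by (simp flip: eq)
  then show "i = j"
    using coord_ev[of j i] ij by (simp split: if_splits)
qed

lemma lincomb_reindex:
  assumes "I \<subseteq> {..<n}"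
  shows "(\<Sum>v\<in>ev ` I. vsc (u v) v) = lincomb (u \<circ> ev) I"
  unfolding lincomb_def using inj_on_subset[OF inj_on_ev assms] by (simp add: sum.reindex)

lemma independent_ev:
  assumes "I \<subseteq> {..<n}"
  shows "vs.independent (ev ` I)"
proof (rule vs.independent_if_scalars_zero)
  show "finite (ev ` I)"
    using finite_subset[OF assms] by simp
next
  fix u v assume "(\<Sum>v\<in>ev ` I. vsc (u v) v) = 0" "v \<in> ev ` I"
  then obtain m where "lincomb (u \<circ> ev) I = 0" "m \<in> I" "v = ev m"
    using lincomb_reindex[OF assms] by auto
  then show "u v = 0"
    using coord_lincomb[OF assms, of m "u \<circ> ev"] by (simp add: coord_def)
qed

lemma dim_span_ev:
  assumes "I \<subseteq> {..<n}"
  shows "vs.dim (vs.span (ev ` I)) = card I"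
  using vs.dim_span_eq_card_independent[OF independent_ev[OF assms]]
    card_image[OF inj_on_subset[OF inj_on_ev assms]] by simp

lemma mem_span_ev_iff:
  assumes "I \<subseteq> {..<n}"
  shows "x \<in> vs.span (ev ` I) \<longleftrightarrow> (\<exists>c. x = lincomb c I)"
proof
  assume "x \<in> vs.span (ev ` I)"
  then obtain u where "x = (\<Sum>v\<in>ev ` I. vsc (u v) v)"
    using vs.span_finite[of "ev ` I"] finite_subset[OF assms] by auto
  then show "\<exists>c. x = lincomb c I"
    using lincomb_reindex[OF assms] by blast
next
  assume "\<exists>c. x = lincomb c I"
  then show "x \<in> vs.span (ev ` I)"
    unfolding lincomb_def by (auto intro: vs.span_sum vs.span_scale vs.span_base imageI)
qed

lemma weight_ge_if_annihilated:
  assumes w: "w \<in> ambient n" "w \<noteq> (\<lambda>_. 0)"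
    and annihilated: "\<forall>j\<le>t. (\<Sum>k<n. P k ^ j * w k) = 0"
  shows "t + 2 \<le> hweight n w"
proof (rule ccontr)
  assume "\<not> t + 2 \<le> hweight n w"
  define S where "S = {k. k < n \<and> w k \<noteq> 0}"
  have "finite S" "card S \<le> t + 1"
    using \<open>\<not> t + 2 \<le> hweight n w\<close> by (simp_all add: S_def hweight_def)
  obtain k0 where "w k0 \<noteq> 0"
    using w(2) by auto
  then have k0: "k0 < n" "k0 \<in> S"
    using w(1) by (auto simp: S_def ambient_def not_le[symmetric])
  define f where "f = (\<Prod>l\<in>S - {k0}. [:- P l, 1:])"
  have "degree f \<le> card (S - {k0})"
    unfolding f_def using \<open>finite S\<close> by (intro degree_prod_linear_le) simp
  then have "degree f \<le> t"
    using \<open>card S \<le> t + 1\<close> k0 \<open>finite S\<close> by simp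
  then have "(\<Sum>k<n. poly f (P k) * w k) = 0"
    by (rule sum_poly_mult_eq_zero[OF annihilated])
  moreover have "(\<Sum>k\<in>{..<n} - {k0}. poly f (P k) * w k) = 0"
  proof (rule sum.neutral, intro ballI)
    fix k assume "k \<in> {..<n} - {k0}"
    then have "w k = 0 \<or> k \<in> S - {k0}"
      by (auto simp: S_def)
    moreover have "poly f (P k) = 0" if "k \<in> S - {k0}"
      unfolding f_def using \<open>finite S\<close> that by (auto simp: poly_prod_linear_eq_0_iff)
    ultimately show "poly f (P k) * w k = 0"
      by auto
  qed
  moreover have "poly f (P k0) \<noteq> 0"
    unfolding f_def using \<open>finite S\<close> k0 by (auto simp: poly_prod_linear_eq_0_iff S_def P_eq_iff)
  ultimately show False
    using \<open>w k0 \<noteq> 0\<close> k0(1) by (simp add: sum.remove[of "{..<n}" k0])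
qed

(* The witness evaluates X * prod_{l<m} (X - P l), of weight n - m; it is annihilated because
   ev 1 is annihilated by all powers of degree at most n - 2. *)
lemma exists_annihilated_of_weight:
  assumes "t + 2 \<le> n"
  obtains w where "w \<in> ambient n" "\<forall>j\<le>t. (\<Sum>k<n. P k ^ j * w k) = 0" "hweight n w = t + 2"
proof
  define m where "m = n - (t + 2)"
  define g where "g = (\<Prod>l<m. [:- P l, 1:])"
  define w where "w = (\<lambda>k. poly g (P k) * ev 1 k)"
  show "w \<in> ambient n"
    by (simp add: w_def ev_def ambient_def)
  have ev_1_annihilated: "\<forall>j\<le>n - 2. (\<Sum>k<n. P k ^ j * ev 1 k) = 0"
  proof (intro allI impI)
    fix j assume "j \<le> n - 2"
    then have "\<not> n dvd j + 1"
      using assms by (intro nat_dvd_not_less) auto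
    then show "(\<Sum>k<n. P k ^ j * ev 1 k) = 0"
      using power_sum[of "j + 1"] by (simp add: ev_def mult.commute)
  qed
  show "\<forall>j\<le>t. (\<Sum>k<n. P k ^ j * w k) = 0"
  proof (intro allI impI)
    fix j assume "j \<le> t"
    have "degree (monom 1 j * g) \<le> j + m"
      using degree_mult_le[of "monom 1 j" g] degree_prod_linear_le[of "{..<m}" P]
      by (simp add: g_def degree_monom_eq)
    also have "\<dots> \<le> n - 2"
      using \<open>j \<le> t\<close> assms by (simp add: m_def)
    finally have "(\<Sum>k<n. poly (monom 1 j * g) (P k) * ev 1 k) = 0"
      by (rule sum_poly_mult_eq_zero[OF ev_1_annihilated])
    then show "(\<Sum>k<n. P k ^ j * w k) = 0"
      by (simp add: w_def poly_monom mult.assoc)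
  qed
  have "w k \<noteq> 0 \<longleftrightarrow> m \<le> k" if "k < n" for k
  proof -
    have "w k \<noteq> 0 \<longleftrightarrow> \<not> (\<exists>l<m. P k = P l)"
      using P_nonzero[OF that]
      by (simp add: w_def ev_def g_def poly_prod_linear_eq_0_iff that lessThan_iff Ball_def)
    also have "(\<exists>l<m. P k = P l) \<longleftrightarrow> k < m"
      using that by (auto simp: m_def P_eq_iff)
    finally show ?thesis
      by linarith
  qed
  then have "{k. k < n \<and> w k \<noteq> 0} = {m..<n}"
    by fastforce
  then show "hweight n w = t + 2"
    using assms by (simp add: hweight_def m_def)
qed

lemma herm_ip_ev: "herm_ip q n (ev j) y = (\<Sum>k<n. P k ^ j * y k ^ q)"
  by (simp add: herm_ip_def ev_def)

lemma herm_ip_lincomb: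
  "herm_ip q n (lincomb d I) y = (\<Sum>j\<in>I. d j * herm_ip q n (ev j) y)"
proof -
  have "herm_ip q n (lincomb d I) y = (\<Sum>k<n. \<Sum>j\<in>I. d j * (P k ^ j * y k ^ q))"
    by (simp add: herm_ip_def lincomb_apply sum_distrib_right mult.assoc)
  also have "\<dots> = (\<Sum>j\<in>I. d j * herm_ip q n (ev j) y)"
    by (subst sum.swap) (simp add: herm_ip_ev sum_distrib_left)
  finally show ?thesis .
qed

lemma mem_herm_dual_span_ev_iff:
  assumes "I \<subseteq> {..<n}"
  shows "y \<in> herm_dual q n (vs.span (ev ` I)) \<longleftrightarrow>
    y \<in> ambient n \<and> (\<forall>j\<in>I. herm_ip q n (ev j) y = 0)"
proof
  assume "y \<in> herm_dual q n (vs.span (ev ` I))"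
  moreover have "ev j \<in> vs.span (ev ` I)" if "j \<in> I" for j
    using that by (intro vs.span_base imageI)
  ultimately show "y \<in> ambient n \<and> (\<forall>j\<in>I. herm_ip q n (ev j) y = 0)"
    by (simp add: herm_dual_def)
next
  assume y: "y \<in> ambient n \<and> (\<forall>j\<in>I. herm_ip q n (ev j) y = 0)"
  have "herm_ip q n x y = 0" if x: "x \<in> vs.span (ev ` I)" for x
  proof -
    obtain d where "x = lincomb d I"
      using x mem_span_ev_iff[OF assms] by blast
    then show ?thesis
      using y by (simp add: herm_ip_lincomb)
  qed
  then show "y \<in> herm_dual q n (vs.span (ev ` I))"
    using y by (simp add: herm_dual_def)
qed

end

section \<open>The involution i \<mapsto> -q i modulo q^2 - 1\<close>

lemma two_digit_le_iff:
  fixes q x0 x1 y0 y1 :: nat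
  assumes "x0 < q" "y0 < q"
  shows "x0 + x1 * q \<le> y0 + y1 * q \<longleftrightarrow> x1 < y1 \<or> (x1 = y1 \<and> x0 \<le> y0)"
proof -
  have less: "u0 + u1 * q < v0 + v1 * q" if "u0 < q" "u1 < v1" for u0 u1 v0 v1 :: nat
  proof -
    have "Suc u1 * q \<le> v1 * q" using that(2) by (intro mult_le_mono1) simp
    then show ?thesis using that(1) by simp
  qed
  consider "x1 < y1" | "x1 = y1" | "y1 < x1" by linarith
  then show ?thesis
  proof cases
    case 1
    then show ?thesis using less[OF assms(1)] by (simp add: less_imp_le)
  next
    case 3
    then show ?thesis using less[OF assms(2)] by (simp add: not_le)
  qed simp
qed

lemma two_digit_eq_iff:
  fixes q x0 x1 y0 y1 :: nat
  assumes "x0 < q" "y0 < q"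
  shows "x0 + x1 * q = y0 + y1 * q \<longleftrightarrow> x0 = y0 \<and> x1 = y1"
proof
  assume eq: "x0 + x1 * q = y0 + y1 * q"
  have "0 < q" using assms(1) by simp
  then have "(x0 + x1 * q) mod q = x0" "(x0 + x1 * q) div q = x1"
    "(y0 + y1 * q) mod q = y0" "(y0 + y1 * q) div q = y1"
    using assms by simp_all
  then show "x0 = y0 \<and> x1 = y1" by (simp add: eq)
qed simp

(* partner q i is the residue of -q * i modulo q^2 - 1 (dvd_add_mult_iff_eq_partner):
   it swaps the two base-q digits of i and complements them to q - 1. *)
definition partner :: "nat \<Rightarrow> nat \<Rightarrow> nat" where
  "partner q i = (if i = 0 then 0 else (q - 1 - i div q) + (q - 1 - i mod q) * q)"

lemma partner_two_digit:
  assumes "a0 < q" "a1 < q" "a0 \<noteq> 0 \<or> a1 \<noteq> 0"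
  shows "partner q (a0 + a1 * q) = (q - 1 - a1) + (q - 1 - a0) * q"
  using assms by (auto simp: partner_def)

context
  fixes q :: nat
  assumes q_ge_2: "2 \<le> q"
begin

lemma digits_less:
  assumes "i < q^2"
  shows "i mod q < q" "i div q < q"
  using assms q_ge_2 by (auto simp: power2_eq_square less_mult_imp_div_less)

lemma top_two_digit: "(q - 1) + (q - 1) * q = q^2 - 1"
  using q_ge_2 by (simp add: power2_eq_square algebra_simps)

lemma partner_add_swapped_digits:
  assumes "i \<noteq> 0" "i < q^2"
  shows "partner q i + q * (i mod q) + i div q = q^2 - 1"
proof -
  have digits: "i mod q \<le> q - 1" "i div q \<le> q - 1"
    using digits_less[OF assms(2)] by linarith+
  have "(q - 1 - i mod q) * q + q * (i mod q) = (q - 1) * q"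
    using digits(1) by (metis add_mult_distrib le_add_diff_inverse2 mult.commute)
  then show ?thesis
    using assms(1) digits(2) top_two_digit by (simp add: partner_def)
qed

lemma partner_less:
  assumes "i < q^2 - 1"
  shows "partner q i < q^2 - 1"
proof (cases "i = 0")
  case True
  then show ?thesis using assms by (simp add: partner_def)
next
  case False
  have "i = i mod q + q * (i div q)"
    by simp
  then have "0 < q * (i mod q) + i div q"
    using False q_ge_2 by (cases "i div q = 0") auto
  then show ?thesis using partner_add_swapped_digits[OF False] assms by linarith
qed

lemma dvd_partner_add:
  assumes "i < q^2 - 1"
  shows "q^2 - 1 dvd partner q i + q * i"
proof (cases "i = 0")
  case False
  define n where "n = q^2 - 1"
  have q_sq: "q * q = n + 1"
    using q_ge_2 by (simp add: n_def power2_eq_square)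
  have "q * i = q * (i mod q + q * (i div q))"
    by simp
  then have "q * i = q * (i mod q) + (n + 1) * (i div q)"
    by (simp only: distrib_left q_sq flip: mult.assoc)
  moreover have "partner q i + q * (i mod q) + i div q = n"
    using partner_add_swapped_digits[OF False] assms by (simp add: n_def)
  ultimately have "partner q i + q * i = n * (1 + i div q)"
    by (simp add: algebra_simps)
  then show ?thesis by (simp add: n_def)
qed (simp add: partner_def)

lemma dvd_add_mult_iff_eq_partner:
  assumes "i < q^2 - 1" "j < q^2 - 1"
  shows "q^2 - 1 dvd j + q * i \<longleftrightarrow> j = partner q i"
proof
  assume "q^2 - 1 dvd j + q * i"
  then have "[j + q * i = partner q i + q * i] (mod q^2 - 1)"
    using dvd_partner_add[OF assms(1)] by (simp add: cong_def dvd_eq_mod_eq_0)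
  then have "[j = partner q i] (mod q^2 - 1)"
    by (simp add: cong_add_rcancel_nat)
  then show "j = partner q i"
    using assms(2) partner_less[OF assms(1)] by (simp add: cong_def)
qed (use dvd_partner_add[OF assms(1)] in simp)

lemma partner_partner:
  assumes "i < q^2 - 1"
  shows "partner q (partner q i) = i"
proof -
  define n where "n = q^2 - 1"
  have q_sq: "q * q = n + 1"
    using q_ge_2 by (simp add: n_def power2_eq_square)
  have "q * (partner q i + q * i) = (i + q * partner q i) + n * i"
    by (simp add: algebra_simps q_sq flip: mult.assoc)
  moreover have "n dvd q * (partner q i + q * i)"
    using dvd_partner_add[OF assms] by (simp add: n_def)
  ultimately have "n dvd i + q * partner q i"
    by (simp add: dvd_add_left_iff)
  then show ?thesis
    using dvd_add_mult_iff_eq_partner[OF partner_less[OF assms] assms] by (simp add: n_def)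
qed

lemma two_digit_partner_closed_iff:
  assumes "a0 < q" "a1 < q" "b0 < q" "b1 < q" "b0 + b1 * q < q^2 - 1"
  shows "(a0 + a1 * q \<noteq> 0 \<and> a0 + a1 * q \<le> b0 + b1 * q
      \<and> partner q (a0 + a1 * q) \<le> b0 + b1 * q) \<longleftrightarrow>
    (a0, a1) \<in> {q - b1..<q} \<times> {..<b1} \<union> {q - b1..b0} \<times> {b1}
      \<union> {q - 1 - b1} \<times> {q - 1 - b0..b1}"
proof (cases "a0 = 0 \<and> a1 = 0")
  case True
  have "\<not> (b0 = q - 1 \<and> b1 = q - 1)"
    using assms(5) top_two_digit by auto
  then show ?thesis
    using True assms(3,4) by auto
next
  case False
  have nonzero: "a0 + a1 * q \<noteq> 0"
    using False assms(1) two_digit_eq_iff[of a0 q 0 a1 0] by auto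
  have le_t: "a0 + a1 * q \<le> b0 + b1 * q \<longleftrightarrow> a1 < b1 \<or> (a1 = b1 \<and> a0 \<le> b0)"
    using assms(1,3) by (rule two_digit_le_iff)
  have "partner q (a0 + a1 * q) \<le> b0 + b1 * q \<longleftrightarrow> (q - 1 - a1) + (q - 1 - a0) * q \<le> b0 + b1 * q"
    using partner_two_digit[of a0 q a1] False assms(1,2) by simp
  also have "\<dots> \<longleftrightarrow> q - 1 - a0 < b1 \<or> (q - 1 - a0 = b1 \<and> q - 1 - a1 \<le> b0)"
    using q_ge_2 assms(3) by (intro two_digit_le_iff) linarith+
  also have "\<dots> \<longleftrightarrow> q - b1 \<le> a0 \<or> (a0 = q - 1 - b1 \<and> q - 1 - b0 \<le> a1)"
    using assms(1-4) by auto
  finally have partner_le_t: "partner q (a0 + a1 * q) \<le> b0 + b1 * q \<longleftrightarrow>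
      q - b1 \<le> a0 \<or> (a0 = q - 1 - b1 \<and> q - 1 - b0 \<le> a1)" .
  show ?thesis
    unfolding le_t partner_le_t using nonzero False assms(1-4) by auto
qed

lemma card_partner_closed:
  assumes "b0 < q" "b1 < q" "b0 + b1 * q < q^2 - 1"
  shows "card {i. i \<le> b0 + b1 * q \<and> partner q i \<le> b0 + b1 * q} =
    (if b0 + b1 < q - 1 then b1^2 + 1 else b1^2 + 2 * (b0 + b1 + 1 - q) + 2)"
proof -
  define t where "t = b0 + b1 * q"
  define val where "val = (\<lambda>(a0, a1). a0 + a1 * q)"
  define D where "D = {q - b1..<q} \<times> {..<b1} \<union> {q - b1..b0} \<times> {b1}
    \<union> {q - 1 - b1} \<times> {q - 1 - b0..b1}"
  have D_digits: "D \<subseteq> {..<q} \<times> {..<q}"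
    using assms(1,2) by (auto simp: D_def)
  have T_minus_0: "{i. i \<le> t \<and> partner q i \<le> t} - {0} = val ` D"
  proof (intro Set.set_eqI iffI)
    fix i assume i: "i \<in> {i. i \<le> t \<and> partner q i \<le> t} - {0}"
    have "i < q^2" using i assms(3) by (simp add: t_def) linarith
    then have digits: "i mod q < q" "i div q < q" by (rule digits_less)+
    have "i = val (i mod q, i div q)" by (simp add: val_def)
    moreover have "(i mod q, i div q) \<in> D"
      using i two_digit_partner_closed_iff[OF digits assms] unfolding D_def t_def by simp
    ultimately show "i \<in> val ` D" by blast
  next
    fix i assume "i \<in> val ` D"
    then obtain a0 a1 where a: "(a0, a1) \<in> D" "i = a0 + a1 * q"
      by (auto simp: val_def)
    then have digits: "a0 < q" "a1 < q"
      using D_digits by auto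
    then show "i \<in> {i. i \<le> t \<and> partner q i \<le> t} - {0}"
      using a two_digit_partner_closed_iff[OF digits assms] unfolding D_def t_def by simp
  qed
  have "inj_on val D"
  proof (rule inj_onI)
    fix x y assume xy: "x \<in> D" "y \<in> D" "val x = val y"
    obtain x0 x1 y0 y1 where "x = (x0, x1)" "y = (y0, y1)"
      by fastforce
    then show "x = y"
      using xy D_digits two_digit_eq_iff[of x0 q y0 x1 y1] by (auto simp: val_def)
  qed
  have "card {i. i \<le> t \<and> partner q i \<le> t} = Suc (card (val ` D))"
    unfolding T_minus_0[symmetric] by (rule card.remove) (auto simp: partner_def)
  also have "\<dots> = Suc (card D)"
    by (simp add: card_image \<open>inj_on val D\<close>)
  also have "card D = b1 * b1 + (Suc b0 - (q - b1)) + (Suc b1 - (q - 1 - b0))"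
    unfolding D_def using assms(1,2)
    by (subst card_Un_disjoint; auto simp: card_cartesian_product)+
  finally show ?thesis
    using assms(1,2) unfolding t_def power2_eq_square by auto
qed

end

section \<open>Hermitian duals\<close>

locale hermitian_enumeration =
  nonzero_enumeration n P for n and P :: "nat \<Rightarrow> 'a::{field,finite}" +
  fixes q :: nat
  assumes primepow_q: "primepow q" and card_eq: "CARD('a) = q^2"
begin

lemma q_ge_2: "2 \<le> q"
  using primepow_gt_Suc_0[OF primepow_q] by simp

lemma n_eq_q: "n = q^2 - 1"
  by (simp add: n_eq card_eq)

lemma power_q_power_q: "(x ^ q) ^ q = (x :: 'a)"
  using power_card_eq_same[of x] by (simp add: card_eq power2_eq_square power_mult)

lemma sum_power_q: "(\<Sum>i\<in>I. f i) ^ q = (\<Sum>i\<in>I. f i ^ q :: 'a)"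
proof -
  obtain e where "q = CHAR('a) ^ e"
    using CHAR_power_eq[OF primepow_q card_eq] by auto
  then show ?thesis
    using freshmans_dream_sum'[OF prime_CHAR_finite_field] by blast
qed

lemma min_dist_herm_dual:
  assumes "t < n"
  shows "min_dist n (herm_dual q n (vs.span (ev ` {0..t}))) = t + 2"
proof -
  define C where "C = herm_dual q n (vs.span (ev ` {0..t}))"
  have "{0..t} \<subseteq> {..<n}"
    using assms by auto
  then have mem_C: "y \<in> C \<longleftrightarrow> y \<in> ambient n \<and> (\<forall>j\<le>t. (\<Sum>k<n. P k ^ j * y k ^ q) = 0)" for y
    by (simp add: C_def mem_herm_dual_span_ev_iff herm_ip_ev Ball_def)
  have q_pos: "0 < q"
    using q_ge_2 by simp
  have lower: "t + 2 \<le> hweight n y" if "y \<in> C" "y \<noteq> (\<lambda>_. 0)" for y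
  proof -
    have "(\<lambda>k. y k ^ q) \<in> ambient n" "(\<lambda>k. y k ^ q) \<noteq> (\<lambda>_. 0)"
      using that q_pos by (auto simp: mem_C ambient_def fun_eq_iff)
    then have "t + 2 \<le> hweight n (\<lambda>k. y k ^ q)"
      using that(1) by (intro weight_ge_if_annihilated) (auto simp: mem_C)
    then show ?thesis
      using q_pos by (simp add: hweight_power)
  qed
  show ?thesis
  proof (cases "t + 2 \<le> n")
    case True
    then obtain w where w: "w \<in> ambient n" "\<forall>j\<le>t. (\<Sum>k<n. P k ^ j * w k) = 0"
      "hweight n w = t + 2"
      by (rule exists_annihilated_of_weight)
    define y where "y = (\<lambda>k. w k ^ q)"
    have "y \<in> C"
      using w q_pos by (simp add: mem_C y_def ambient_def power_q_power_q)
    moreover have "hweight n y = t + 2"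
      using w(3) q_pos by (simp add: y_def hweight_power)
    moreover have "y \<noteq> (\<lambda>_. 0)"
      using \<open>hweight n y = t + 2\<close> by (auto simp: hweight_def)
    ultimately show ?thesis
      unfolding C_def[symmetric] using lower by (intro min_dist_eqI) auto
  next
    case False
    have "y = (\<lambda>_. 0)" if "y \<in> C" for y
      using lower[OF that] hweight_le[of n y] False by fastforce
    then have "C \<subseteq> {(\<lambda>_. 0)}"
      by blast
    then show ?thesis
      using False assms by (simp add: C_def min_dist_def)
  qed
qed

lemmas dvd_iff_eq_partner = dvd_add_mult_iff_eq_partner[OF q_ge_2, folded n_eq_q]
lemmas partner_involutive = partner_partner[OF q_ge_2, folded n_eq_q]

lemma herm_ip_ev_lincomb:
  "herm_ip q n (ev j) (lincomb c I) = (\<Sum>i\<in>I. c i ^ q * (\<Sum>k<n. P k ^ (j + q * i)))"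
proof -
  have "herm_ip q n (ev j) (lincomb c I) = (\<Sum>k<n. \<Sum>i\<in>I. c i ^ q * P k ^ (j + q * i))"
    unfolding herm_ip_ev
    by (intro sum.cong refl) (simp add: lincomb_apply sum_power_q sum_distrib_left
        power_mult_distrib power_add power_mult mult.commute mult.left_commute)
  also have "\<dots> = (\<Sum>i\<in>I. c i ^ q * (\<Sum>k<n. P k ^ (j + q * i)))"
    by (subst sum.swap) (simp add: sum_distrib_left)
  finally show ?thesis .
qed

lemma herm_ip_ev_lincomb_interval:
  assumes "j \<le> t" "t < n"
  shows "herm_ip q n (ev j) (lincomb c {0..t}) =
    (if partner q j \<le> t then - (c (partner q j) ^ q) else 0)"
proof -
  have power_sum_eq: "(\<Sum>k<n. P k ^ (j + q * i)) = (if i = partner q j then -1 else 0)"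
    if "i \<le> t" for i
  proof -
    have "n dvd j + q * i \<longleftrightarrow> j = partner q i"
      using assms that by (intro dvd_iff_eq_partner) auto
    also have "\<dots> \<longleftrightarrow> i = partner q j"
      using assms that partner_involutive by auto
    finally show ?thesis
      by (simp add: power_sum)
  qed
  have "herm_ip q n (ev j) (lincomb c {0..t}) =
      (\<Sum>i\<in>{0..t}. if i = partner q j then - (c i ^ q) else 0)"
    unfolding herm_ip_ev_lincomb by (intro sum.cong refl) (simp add: power_sum_eq)
  also have "\<dots> = (if partner q j \<le> t then - (c (partner q j) ^ q) else 0)"
    by (simp add: sum.delta)
  finally show ?thesis .
qed

lemma lincomb_mem_herm_dual_iff:
  assumes "t < n"
  shows "lincomb c {0..t} \<in> herm_dual q n (vs.span (ev ` {0..t})) \<longleftrightarrow>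
    (\<forall>i\<le>t. partner q i \<le> t \<longrightarrow> c i = 0)"
proof -
  have "{0..t} \<subseteq> {..<n}" "0 < q"
    using assms q_ge_2 by auto
  then have "lincomb c {0..t} \<in> herm_dual q n (vs.span (ev ` {0..t})) \<longleftrightarrow>
      (\<forall>j\<le>t. partner q j \<le> t \<longrightarrow> c (partner q j) = 0)"
    using assms by (auto simp: mem_herm_dual_span_ev_iff lincomb_in_ambient
        herm_ip_ev_lincomb_interval)
  also have "\<dots> \<longleftrightarrow> (\<forall>i\<le>t. partner q i \<le> t \<longrightarrow> c i = 0)"
    using assms partner_involutive by (metis le_less_trans)
  finally show ?thesis .
qed

lemma span_ev_inter_herm_dual:
  assumes "t < n"
  shows "vs.span (ev ` {0..t}) \<inter> herm_dual q n (vs.span (ev ` {0..t})) =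
    vs.span (ev ` {i. i \<le> t \<and> t < partner q i})"
    (is "?E \<inter> ?C = vs.span (ev ` ?J)")
proof -
  have sub: "{0..t} \<subseteq> {..<n}" "?J \<subseteq> {0..t}"
    using assms by auto
  show ?thesis
  proof (intro equalityI subsetI)
    fix x
    assume "x \<in> ?E \<inter> ?C"
    then obtain c where x: "x = lincomb c {0..t}" "x \<in> ?C"
      using mem_span_ev_iff[OF sub(1)] by blast
    then have "lincomb c {0..t} = lincomb c ?J"
      using assms sub by (intro lincomb_mono_neutral) (auto simp: lincomb_mem_herm_dual_iff)
    then show "x \<in> vs.span (ev ` ?J)"
      using x(1) sub mem_span_ev_iff[of ?J] by auto
  next
    fix x
    assume "x \<in> vs.span (ev ` ?J)"
    then obtain c where x: "x = lincomb c ?J"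
      using mem_span_ev_iff[of ?J] sub by auto
    define c' where "c' = (\<lambda>i. if i \<in> ?J then c i else 0)"
    have "lincomb c ?J = lincomb c' ?J"
      unfolding lincomb_def c'_def by (intro sum.cong) auto
    also have "\<dots> = lincomb c' {0..t}"
      using sub by (intro lincomb_mono_neutral[symmetric]) (auto simp: c'_def)
    finally have "x = lincomb c' {0..t}"
      using x by simp
    moreover have "lincomb c' {0..t} \<in> ?C"
      using assms by (auto simp: lincomb_mem_herm_dual_iff c'_def)
    ultimately show "x \<in> ?E \<inter> ?C"
      using mem_span_ev_iff[OF sub(1)] by auto
  qed
qed

lemma cdim_defect_herm_hull:
  assumes "t < n"
  shows "cdim (vs.span (ev ` {0..t})) -
      cdim (vs.span (ev ` {0..t}) \<inter> herm_dual q n (vs.span (ev ` {0..t}))) =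
    card {i. i \<le> t \<and> partner q i \<le> t}"
proof -
  have "{0..t} = {i. i \<le> t \<and> t < partner q i} \<union> {i. i \<le> t \<and> partner q i \<le> t}"
    by auto
  then have "card {0..t} =
      card {i. i \<le> t \<and> t < partner q i} + card {i. i \<le> t \<and> partner q i \<le> t}"
    by (metis (no_types, lifting) card_Un_disjoint disjoint_iff finite_atLeastAtMost
        finite_Un mem_Collect_eq not_le)
  moreover have "{0..t} \<subseteq> {..<n}" "{i. i \<le> t \<and> t < partner q i} \<subseteq> {..<n}"
    using assms by auto
  ultimately show ?thesis
    unfolding cdim_def span_ev_inter_herm_dual[OF assms] by (simp only: dim_span_ev)
qed

end

theorem mainTheorem1:
  fixes q n t b0 b1 :: nat and P :: "nat \<Rightarrow> 'a::{field,finite}"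
  assumes "primepow q"
    and "CARD('a) = q ^ 2"
    and "n = q ^ 2 - 1"
    and "bij_betw P {0..<n} (UNIV - {0})"
    and "t \<le> n - 1"
    and "b0 \<le> q - 1" and "b1 \<le> q - 1" and "t = b0 + b1 * q"
  shows "let E = D_code n P {0..t}; C = herm_dual q n E; k = cdim E;
             c = cdim E - cdim (E \<inter> C)
         in (b0 + b1 < q - 1 \<longrightarrow>
               int n - 2 * int k + int c = (int q - int b1)^2 - 2 * int b0 - 2
             \<and> min_dist n C = t + 2 \<and> c = b1^2 + 1)
          \<and> (b0 + b1 \<ge> q - 1 \<longrightarrow>
               int n - 2 * int k + int c = (int q - int b1 - 1)^2
             \<and> min_dist n C = t + 2 \<and> int c = int (b1^2) + 2 * (int b0 + int b1 - int q) + 4)"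
proof -
  interpret hermitian_enumeration n P q
    using assms(1-4) by unfold_locales simp_all
  have t_less: "t < n"
    using assms(5) n_pos by simp
  have "{0..t} \<subseteq> {..<n}"
    using t_less by auto
  then have k: "cdim (vs.span (ev ` {0..t})) = t + 1"
    unfolding cdim_def by (simp only: dim_span_ev) simp
  have card_T: "card {i. i \<le> t \<and> partner q i \<le> t} =
      (if b0 + b1 < q - 1 then b1^2 + 1 else b1^2 + 2 * (b0 + b1 + 1 - q) + 2)"
    using card_partner_closed[OF q_ge_2] assms(6-8) t_less q_ge_2 n_eq_q by simp
  have n_int: "int n = int q ^ 2 - 1"
    using q_ge_2 n_eq_q by (simp add: of_nat_diff)
  show ?thesis
    unfolding Let_def D_code_eq cdim_defect_herm_hull[OF t_less] min_dist_herm_dual[OF t_less]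
    unfolding k card_T
    using n_int assms(8) q_ge_2
    by (auto simp: algebra_simps power2_eq_square of_nat_diff)
qed

end
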